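(* Let $\mathcal D$ be a distribution over $\mathcal X\times\{0,1\}$ with $\Pr_{(x,y)\sim\mathcal D}[y=0]\in[1/2-b_1,1/2+b_1]$ for some $b_1>0$. Let $\mathcal D_{\mathrm{shift}}$ be a distribution over $\mathcal X\times\{0,1\}$ whose class-conditional distributions equal those of $\mathcal D$, i.e., $\mathcal D_{\mathrm{shift}}(\cdot\mid Y=y)=\mathcal D(\cdot\mid Y=y)$ for all $y\in\{0,1\}$, and with $\Pr_{(x,y)\sim\mathcal D_{\mathrm{shift}}}[y=0]\in[1/2+b_2,1/2+b_3]$ for $b_1<b_2<b_3<1/2$. Let $h:\mathcal X\to\{0,1\}$ satisfy $\ell_{\mathcal D_{\mathrm{shift}}}(h):=\Pr_{(x,y)\sim\mathcal D_{\mathrm{shift}}}[h(x)\ne y]\le\Pr_{(x,y)\sim\mathcal D_{\mathrm{shift}}}[y=1]/2$. Then $\ell_{\mathcal D}(h):=\Pr_{(x,y)\sim\mathcal D}[h(x)\ne y]\le1/4+b_1/2$. *)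

theory Defs
  imports "HOL-Probability.Probability"
begin

text \<open>Distributions over X \<times> {0,1} are probability measures on X \<Otimes> count_space UNIV,
 labels encoded as bool (False = 0, True = 1).\<close>

definition label_prob :: "('a \<times> bool) measure \<Rightarrow> bool \<Rightarrow> real" where
  "label_prob D y = measure D {z \<in> space D. snd z = y}"

definition cond_prob :: "('a \<times> bool) measure \<Rightarrow> 'a set \<Rightarrow> bool \<Rightarrow> real" where
  "cond_prob D A y = measure D {z \<in> space D. fst z \<in> A \<and> snd z = y} / label_prob D y"

definition err :: "('a \<times> bool) measure \<Rightarrow> ('a \<Rightarrow> bool) \<Rightarrow> real" where
  "err D h = measure D {z \<in> space D. h (fst z) \<noteq> snd z}"

end

theory Submission
  imports Defs
begin

text \<open>Writing \<open>e\<^sub>y\<close> for the class-conditional error of \<open>h\<close> on label \<open>y\<close> and \<open>p\<close> for the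
  probability of label 0, the error is the mixture \<open>e\<^sub>0 p + e\<^sub>1 (1 - p)\<close>, and the \<open>e\<^sub>y\<close> are the
  same for both distributions. Under the shift \<open>p > 1/2\<close>, so the bound \<open>(1 - p)/2\<close> on the
  shifted error forces \<open>e\<^sub>0 + e\<^sub>1 \<le> 1/2\<close>; under the original distribution the mixture is then at
  most \<open>max p (1 - p) \<cdot> (e\<^sub>0 + e\<^sub>1) \<le> (1/2 + b\<^sub>1)/2\<close>.\<close>

lemma mixture_sum_le_half:
  fixes e0 e1 q :: real
  assumes "e0 \<ge> 0" "1/2 \<le> q" "q < 1"
    and "e0 * q + e1 * (1 - q) \<le> (1 - q) / 2"
  shows "e0 + e1 \<le> 1/2"
proof -
  have "e0 * (1 - q) \<le> e0 * q" using assms(1,2) by (intro mult_left_mono) auto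
  then have "(e0 + e1) * (1 - q) \<le> e0 * q + e1 * (1 - q)" by (simp add: distrib_right)
  also have "\<dots> \<le> 1/2 * (1 - q)" using assms(4) by simp
  finally show ?thesis using assms(3) by (simp add: mult_le_cancel_right)
qed

lemma mixture_le_of_sum_le_half:
  fixes e0 e1 p b :: real
  assumes "e0 \<ge> 0" "e1 \<ge> 0" "e0 + e1 \<le> 1/2"
    and "1/2 - b \<le> p" "p \<le> 1/2 + b"
  shows "e0 * p + e1 * (1 - p) \<le> 1/4 + b/2"
proof -
  have "e0 * p + e1 * (1 - p) \<le> (e0 + e1) * (1/2 + b)"
    using assms by (simp add: distrib_right mult_left_mono add_mono)
  also have "\<dots> \<le> 1/2 * (1/2 + b)"
    using assms by (intro mult_right_mono) auto
  finally show ?thesis by simp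
qed

context
  fixes X :: "'a measure" and M :: "('a \<times> bool) measure"
  assumes prob_M: "prob_space M"
    and sets_M: "sets M = sets (X \<Otimes>\<^sub>M count_space UNIV)"
begin

interpretation prob_space M by (rule prob_M)

lemma space_labelled: "space M = space X \<times> UNIV"
  using sets_eq_imp_space_eq[OF sets_M] by (simp add: space_pair_measure)

lemma labelled_event_sets: "A \<in> sets X \<Longrightarrow> A \<times> {y} \<in> sets M"
  unfolding sets_M by (intro pair_measureI) auto

lemma label_prob_eq: "label_prob M y = measure M (space X \<times> {y})"
  unfolding label_prob_def using space_labelled by (intro arg_cong[where f = "measure M"]) auto

lemma label_prob_True: "label_prob M True = 1 - label_prob M False"
proof -
  have "space X \<times> {True} = space M - space X \<times> {False}" using space_labelled by auto
  then show ?thesis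
    using prob_compl[OF labelled_event_sets[OF sets.top]] by (simp add: label_prob_eq)
qed

lemma cond_prob_mult_label_prob:
  assumes A: "A \<in> sets X" and "A \<subseteq> space X"
  shows "cond_prob M A y * label_prob M y = measure M (A \<times> {y})"
proof -
  have event: "{z \<in> space M. fst z \<in> A \<and> snd z = y} = A \<times> {y}"
    using space_labelled assms(2) by auto
  show ?thesis
  proof (cases "label_prob M y = 0")
    case True
    have "measure M (A \<times> {y}) \<le> measure M (space X \<times> {y})"
      using assms by (intro finite_measure_mono labelled_event_sets sets.top) auto
    then have "measure M (A \<times> {y}) = 0"
      using True measure_nonneg[of M "A \<times> {y}"] unfolding label_prob_eq by linarith
    then show ?thesis using True by simp
  next
    case False
    then show ?thesis by (simp add: cond_prob_def event)
  qed
qed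

lemma err_eq_cond_prob_mixture:
  assumes h: "h \<in> X \<rightarrow>\<^sub>M count_space UNIV"
  shows "err M h = cond_prob M {x \<in> space X. h x} False * label_prob M False
    + cond_prob M {x \<in> space X. \<not> h x} True * label_prob M True"
proof -
  have pos: "{x \<in> space X. h x} \<in> sets X" and neg: "{x \<in> space X. \<not> h x} \<in> sets X"
    using h by measurable
  have "{z \<in> space M. h (fst z) \<noteq> snd z}
      = {x \<in> space X. h x} \<times> {False} \<union> {x \<in> space X. \<not> h x} \<times> {True}"
    using space_labelled by auto
  then have "err M h = measure M ({x \<in> space X. h x} \<times> {False})
      + measure M ({x \<in> space X. \<not> h x} \<times> {True})"
    unfolding err_def using pos neg
    by (simp add: finite_measure_Union labelled_event_sets disjoint_iff)
  then show ?thesis using pos neg by (simp add: cond_prob_mult_label_prob)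
qed

end

theorem lemma10p8:
  fixes X :: "'a measure" and D Ds :: "('a \<times> bool) measure"
    and h :: "'a \<Rightarrow> bool" and b1 b2 b3 :: real
  assumes "prob_space D" and "prob_space Ds"
    and "sets D = sets (X \<Otimes>\<^sub>M count_space UNIV)"
    and "sets Ds = sets (X \<Otimes>\<^sub>M count_space UNIV)"
    and "b1 > 0" and "b1 < b2" and "b2 < b3" and "b3 < 1/2"
    and "1/2 - b1 \<le> label_prob D False" and "label_prob D False \<le> 1/2 + b1"
    and "1/2 + b2 \<le> label_prob Ds False" and "label_prob Ds False \<le> 1/2 + b3"
    and "\<forall>A \<in> sets X. \<forall>y. cond_prob Ds A y = cond_prob D A y"
    and "h \<in> X \<rightarrow>\<^sub>M count_space UNIV"
    and "err Ds h \<le> label_prob Ds True / 2"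
  shows "err D h \<le> 1/4 + b1/2"
proof -
  define e0 where "e0 = cond_prob D {x \<in> space X. h x} False"
  define e1 where "e1 = cond_prob D {x \<in> space X. \<not> h x} True"
  have "{x \<in> space X. h x} \<in> sets X" "{x \<in> space X. \<not> h x} \<in> sets X"
    using assms(14) by measurable
  then have err_Ds: "err Ds h = e0 * label_prob Ds False + e1 * (1 - label_prob Ds False)"
    using err_eq_cond_prob_mixture[OF assms(2,4,14)] label_prob_True[OF assms(2,4)] assms(13)
    by (simp add: e0_def e1_def)
  have err_D: "err D h = e0 * label_prob D False + e1 * (1 - label_prob D False)"
    using err_eq_cond_prob_mixture[OF assms(1,3,14)] label_prob_True[OF assms(1,3)]
    by (simp add: e0_def e1_def)
  have "e0 \<ge> 0" "e1 \<ge> 0" by (simp_all add: e0_def e1_def cond_prob_def label_prob_def)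
  moreover have "e0 + e1 \<le> 1/2"
    using \<open>e0 \<ge> 0\<close> assms(5-8,11,12,15) err_Ds label_prob_True[OF assms(2,4)]
    by (intro mixture_sum_le_half[of e0 "label_prob Ds False"]) auto
  ultimately show ?thesis
    using err_D assms(9,10) by (simp add: mixture_le_of_sum_le_half)
qed

end
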